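(* Let $q$ be a prime power, $M\geq2$ an integer, $k\geq 1$, and let $f\in\mathbb{F}_q[x]$ be a SRIM polynomial of degree $2k$. Let $C_f\in\mathrm{Sp}(2k,q)$ be an element with characteristic polynomial $f$, and suppose $\alpha\in\mathrm{Sp}(2k,q)$ satisfies $\alpha^M=C_f$. Then $f(x^M)$ has a SRIM factor of degree $2k$.
   Context: For a monic polynomial $f$ of degree $r$ with $f(0)\neq0$, $f^*(x)=f(0)^{-1}x^rf(x^{-1})$; $f$ is self-reciprocal if $f=f^*$. SRIM means self-reciprocal irreducible monic. $\mathrm{Sp}(2k,q)$ is the symplectic group of a non-degenerate alternating form on $\mathbb{F}_q^{2k}$. *)

theory Defs
  imports "HOL-Computational_Algebra.Polynomial" "Jordan_Normal_Form.Char_Poly"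
begin

definition reciprocal_poly :: "'a::field poly \<Rightarrow> 'a poly" where
  "reciprocal_poly f = Polynomial.smult (inverse (coeff f 0)) (reflect_poly f)"

definition self_reciprocal :: "'a::field poly \<Rightarrow> bool" where
  "self_reciprocal f \<longleftrightarrow> coeff f 0 \<noteq> 0 \<and> reciprocal_poly f = f"

definition SRIM :: "'a::field poly \<Rightarrow> bool" where
  "SRIM f \<longleftrightarrow> monic f \<and> irreducible f \<and> self_reciprocal f"

text \<open>Gram matrix J of a non-degenerate alternating bilinear form (u,v) |-> u^T J v on K^n.\<close>
definition nondeg_alternating :: "nat \<Rightarrow> 'a::field mat \<Rightarrow> bool" where
  "nondeg_alternating n J \<longleftrightarrow> J \<in> carrier_mat n n \<and> transpose_mat J = - J
     \<and> (\<forall>i<n. J $$ (i, i) = 0) \<and> det J \<noteq> 0"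

definition symplectic_group :: "nat \<Rightarrow> 'a::field mat \<Rightarrow> 'a mat set" where
  "symplectic_group n J = {A \<in> carrier_mat n n. transpose_mat A * J * A = J}"

end

theory Submission
  imports Defs
begin

text \<open>
  Write g for the characteristic polynomial of \<alpha>. By Cayley-Hamilton, f(\<alpha>^M) = f(C_f) = 0.
  Take an irreducible p and a vector w \<noteq> 0 with p(\<alpha>) w = 0. If deg p < deg f, the deg f residues
  of x^(Mj) modulo p are linearly dependent, which yields a nonzero h of degree < deg f with
  h(C_f) w = 0; as f is irreducible and f(C_f) w = 0, this forces f | h, which is absurd. So p, a
  divisor of g, has degree 2k = deg g, and g is irreducible. Hence g divides every polynomial that
  vanishes at \<alpha>, in particular f(x^M). Finally, \<alpha>^-1 = J^-1 \<alpha>^T J also has characteristic polynomial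
  g, so the reversal of g vanishes at \<alpha> and is a multiple of g; comparing degrees and constant
  terms shows that g is self-reciprocal.
\<close>

definition poly_mat :: "'a::comm_ring_1 poly \<Rightarrow> 'a mat \<Rightarrow> 'a mat" where
  "poly_mat p A = fold_coeffs (\<lambda>a B. a \<cdot>\<^sub>m 1\<^sub>m (dim_row A) + A * B) p (0\<^sub>m (dim_row A) (dim_row A))"

lemma zero_smult_mat [simp]: "(0 :: 'a::semiring_1) \<cdot>\<^sub>m A = 0\<^sub>m (dim_row A) (dim_col A)"
  by (rule eq_matI) auto

lemma add_add_add_comm_mat:
  assumes "W \<in> carrier_mat nr nc" "X \<in> carrier_mat nr nc" "Y \<in> carrier_mat nr nc" "Z \<in> carrier_mat nr nc"
  shows "(W + X) + (Y + Z) = (W + Y) + (X + (Z :: 'a::comm_monoid_add mat))"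
  using assms by (auto intro!: eq_matI simp: ac_simps)

lemma one_smult_mat [simp]: "(1 :: 'a::monoid_mult) \<cdot>\<^sub>m A = A"
  by (rule eq_matI) auto

lemma smult_smult_mat: "a \<cdot>\<^sub>m (b \<cdot>\<^sub>m A) = (a * b) \<cdot>\<^sub>m (A :: 'a::semigroup_mult mat)"
  by (rule eq_matI) (auto simp: mult.assoc)

context
  fixes A :: "'a::comm_ring_1 mat" and n :: nat
  assumes A: "A \<in> carrier_mat n n"
begin

lemma poly_mat_0 [simp]: "poly_mat 0 A = 0\<^sub>m n n"
  using A by (simp add: poly_mat_def)

lemma poly_mat_pCons: "poly_mat (pCons a p) A = a \<cdot>\<^sub>m 1\<^sub>m n + A * poly_mat p A"
proof (cases "p = 0 \<and> a = 0")
  case True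
  then show ?thesis using A by auto
next
  case False
  then have "coeffs (pCons a p) = a # coeffs p" by (auto simp: cCons_def)
  then show ?thesis using A unfolding poly_mat_def fold_coeffs_def by simp
qed

lemma poly_mat_carrier [simp]: "poly_mat p A \<in> carrier_mat n n"
  using A by (induction p) (auto simp: poly_mat_pCons)

lemma dim_poly_mat [simp]: "dim_row (poly_mat p A) = n" "dim_col (poly_mat p A) = n"
  using carrier_matD[OF poly_mat_carrier] by auto

lemma poly_mat_const [simp]: "poly_mat [:a:] A = a \<cdot>\<^sub>m 1\<^sub>m n"
  using A by (simp add: poly_mat_pCons)

lemma poly_mat_one [simp]: "poly_mat 1 A = 1\<^sub>m n"
  using poly_mat_const[of 1] by (auto simp: one_pCons intro!: eq_matI)

lemma poly_mat_add: "poly_mat (p + q) A = poly_mat p A + poly_mat q A"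
proof (induction p arbitrary: q)
  case (pCons a p)
  obtain b q' where q: "q = pCons b q'" by (cases q)
  have "poly_mat (pCons a p + q) A = (a + b) \<cdot>\<^sub>m 1\<^sub>m n + A * (poly_mat p A + poly_mat q' A)"
    using pCons by (simp add: q poly_mat_pCons)
  also have "\<dots> = (a \<cdot>\<^sub>m 1\<^sub>m n + A * poly_mat p A) + (b \<cdot>\<^sub>m 1\<^sub>m n + A * poly_mat q' A)"
    using A by (simp add: mult_add_distrib_mat[of A n n _ n] add_smult_distrib_right_mat[OF one_carrier_mat]
        add_add_add_comm_mat[of _ n n])
  finally show ?case by (simp add: q poly_mat_pCons)
qed (use A in simp)

lemma poly_mat_smult: "poly_mat (Polynomial.smult c p) A = c \<cdot>\<^sub>m poly_mat p A"
proof (induction p)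
  case (pCons a p)
  then show ?case
    using A by (simp add: poly_mat_pCons mult_smult_distrib[of _ n n _ n] add_smult_distrib_left_mat[of _ n n]
        smult_smult_mat)
qed (use A in simp)

lemma poly_mat_mult: "poly_mat (p * q) A = poly_mat p A * poly_mat q A"
proof (induction p)
  case (pCons a p)
  have "poly_mat (pCons a p * q) A = a \<cdot>\<^sub>m poly_mat q A + A * (poly_mat p A * poly_mat q A)"
    using pCons A by (simp add: poly_mat_add poly_mat_smult poly_mat_pCons
        left_add_zero_mat[OF mult_carrier_mat[OF A mult_carrier_mat[OF poly_mat_carrier poly_mat_carrier]]])
  also have "\<dots> = (a \<cdot>\<^sub>m 1\<^sub>m n + A * poly_mat p A) * poly_mat q A"
    using A by (simp add: add_mult_distrib_mat[of _ n n _ _ n] mult_smult_assoc_mat[of _ n n _ n]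
        assoc_mult_mat[of _ n n _ n _ n] left_mult_one_mat[OF poly_mat_carrier])
  finally show ?case by (simp add: poly_mat_pCons)
qed (use A in \<open>simp add: left_mult_zero_mat[OF poly_mat_carrier]\<close>)

lemma poly_mat_monom: "poly_mat (monom c k) A = c \<cdot>\<^sub>m A ^\<^sub>m k"
proof (induction k)
  case (Suc k)
  have "A * A ^\<^sub>m k = A ^\<^sub>m k * A"
  proof (induction k)
    case (Suc k)
    then show ?case
      using A by (simp add: assoc_mult_mat[of _ n n _ n _ n, symmetric])
  qed (use A in simp)
  with Suc show ?case
    using A by (simp add: monom_Suc poly_mat_pCons mult_smult_distrib[of _ n n _ n]
        left_add_zero_mat[OF smult_carrier_mat[OF mult_carrier_mat[OF pow_carrier_mat[OF A] A]]])
qed (use A in \<open>simp add: monom_0\<close>)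

lemma index_poly_mat:
  assumes "i < n" "j < n" "degree p < N"
  shows "poly_mat p A $$ (i, j) = (\<Sum>l<N. coeff p l * (A ^\<^sub>m l) $$ (i, j))"
proof -
  have sum: "poly_mat (\<Sum>l\<in>L. f l) A $$ (i, j) = (\<Sum>l\<in>L. poly_mat (f l) A $$ (i, j))"
    if "finite L" for L and f :: "nat \<Rightarrow> 'a poly"
    using that by (induction L rule: finite_induct) (use assms A in \<open>simp_all add: poly_mat_add\<close>)
  have monoms: "(\<Sum>l<N. monom (coeff p l) l) = p"
    using assms(3) by (auto simp: poly_eq_iff coeff_sum coeff_eq_0)
  have "poly_mat p A $$ (i, j) = (\<Sum>l<N. poly_mat (monom (coeff p l) l) A $$ (i, j))"
    using sum[of "{..<N}" "\<lambda>l. monom (coeff p l) l"] unfolding monoms by simp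
  then show ?thesis
    using assms A by (simp add: poly_mat_monom)
qed

end

lemma poly_mat_pcompose:
  assumes A: "A \<in> carrier_mat n n"
  shows "poly_mat (pcompose p q) A = poly_mat p (poly_mat q A)"
proof (induction p)
  case (pCons a p)
  then show ?case
    using A by (simp add: pcompose_pCons poly_mat_add poly_mat_mult poly_mat_pCons[OF poly_mat_carrier[OF A]])
qed (use A in \<open>simp add: poly_mat_0[OF poly_mat_carrier[OF A]]\<close>)

definition coeff_mat :: "'a::zero poly mat \<Rightarrow> nat \<Rightarrow> 'a mat" where
  "coeff_mat P k = map_mat (\<lambda>p. coeff p k) P"

lemma dim_coeff_mat [simp]: "dim_row (coeff_mat P k) = dim_row P" "dim_col (coeff_mat P k) = dim_col P"
  unfolding coeff_mat_def by simp_all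

lemma coeff_mat_carrier: "P \<in> carrier_mat nr nc \<Longrightarrow> coeff_mat P k \<in> carrier_mat nr nc"
  unfolding coeff_mat_def by simp

lemma coeff_mat_add:
  "P \<in> carrier_mat nr nc \<Longrightarrow> Q \<in> carrier_mat nr nc \<Longrightarrow> coeff_mat (P + Q) k = coeff_mat P k + coeff_mat Q k"
  unfolding coeff_mat_def by (auto intro!: eq_matI)

lemma coeff_mat_X_smult:
  "coeff_mat ([:0, 1:] \<cdot>\<^sub>m P) k = (if k = 0 then 0\<^sub>m (dim_row P) (dim_col P) else coeff_mat P (k - 1))"
  for P :: "'a::comm_semiring_1 poly mat"
  unfolding coeff_mat_def by (auto intro!: eq_matI simp: coeff_pCons split: nat.split)

lemma coeff_mat_const_mult:
  assumes "A \<in> carrier_mat nr n" "P \<in> carrier_mat n nc"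
  shows "coeff_mat (map_mat (\<lambda>a. [:a:]) A * P) k = A * coeff_mat P k"
  using assms unfolding coeff_mat_def
  by (auto intro!: eq_matI simp: scalar_prod_def coeff_sum)

lemma coeff_mat_smult_one: "coeff_mat (p \<cdot>\<^sub>m 1\<^sub>m n) k = coeff p k \<cdot>\<^sub>m 1\<^sub>m n"
  unfolding coeff_mat_def by (auto intro!: eq_matI)

lemma coeff_mat_eventually_zero:
  obtains N where "\<And>k. N \<le> k \<Longrightarrow> coeff_mat P k = 0\<^sub>m (dim_row P) (dim_col P)"
proof
  fix k
  assume k: "Suc (\<Sum>i<dim_row P. \<Sum>j<dim_col P. degree (P $$ (i, j))) \<le> k"
  have "degree (P $$ (i, j)) < k" if "i < dim_row P" "j < dim_col P" for i j
  proof -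
    have "degree (P $$ (i, j)) \<le> (\<Sum>j<dim_col P. degree (P $$ (i, j)))"
      using that by (intro member_le_sum) auto
    also have "\<dots> \<le> (\<Sum>i<dim_row P. \<Sum>j<dim_col P. degree (P $$ (i, j)))"
      using that by (intro member_le_sum[of i]) auto
    finally show ?thesis using k by simp
  qed
  then show "coeff_mat P k = 0\<^sub>m (dim_row P) (dim_col P)"
    unfolding coeff_mat_def by (auto intro!: eq_matI coeff_eq_0)
qed

lemma coeff_mat_char_poly_matrix_mult:
  assumes A: "A \<in> carrier_mat n n" and P: "P \<in> carrier_mat n n"
  shows "coeff_mat (char_poly_matrix A * P) k =
    (if k = 0 then 0\<^sub>m n n else coeff_mat P (k - 1)) - A * coeff_mat P k"
proof -
  have "map_mat (\<lambda>a. [:- a:]) A = map_mat (\<lambda>a. [:a:]) (- A)"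
    by (auto intro!: eq_matI)
  then have "char_poly_matrix A * P = [:0, 1:] \<cdot>\<^sub>m P + map_mat (\<lambda>a. [:a:]) (- A) * P"
    unfolding char_poly_matrix_def using A P
    by (simp add: add_mult_distrib_mat[of _ n n _ _ n] mult_smult_assoc_mat[of _ n n _ n])
  moreover have "A * coeff_mat P k \<in> carrier_mat n n"
    using A coeff_mat_carrier[OF P] by simp
  ultimately show ?thesis
    using A P coeff_mat_carrier[OF P]
    by (simp add: coeff_mat_add[of _ n n] coeff_mat_X_smult coeff_mat_const_mult[of _ n n]
        add_uminus_minus_mat[of _ n n])
qed

lemma coeff_char_poly_smult_one:
  assumes A: "A \<in> carrier_mat n n"
  defines "B \<equiv> coeff_mat (adj_mat (char_poly_matrix A))"
  shows "coeff (char_poly A) l \<cdot>\<^sub>m 1\<^sub>m n = (if l = 0 then 0\<^sub>m n n else B (l - 1)) - A * B l"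
proof -
  have P: "char_poly_matrix A \<in> carrier_mat n n"
    using A by simp
  have "char_poly A \<cdot>\<^sub>m 1\<^sub>m n = char_poly_matrix A * adj_mat (char_poly_matrix A)"
    using adj_mat(2)[OF P] unfolding char_poly_def ..
  then have "coeff (char_poly A) l \<cdot>\<^sub>m 1\<^sub>m n = coeff_mat (char_poly_matrix A * adj_mat (char_poly_matrix A)) l"
    unfolding coeff_mat_smult_one[symmetric] by simp
  then show ?thesis
    unfolding B_def using coeff_mat_char_poly_matrix_mult[OF A adj_mat(1)[OF P]] by simp
qed

text \<open>Multiplied by A^l, the identities of coeff_char_poly_smult_one telescope.\<close>

theorem cayley_hamilton:
  assumes A: "A \<in> carrier_mat n n"
  shows "poly_mat (char_poly A) A = 0\<^sub>m n n"
proof -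
  define B where "B = coeff_mat (adj_mat (char_poly_matrix A))"
  define D where "D l = (if l = 0 then 0\<^sub>m n n else B (l - 1))" for l
  have adj: "adj_mat (char_poly_matrix A) \<in> carrier_mat n n"
    using adj_mat(1)[OF char_poly_matrix_closed[OF A]] .
  have B: "B l \<in> carrier_mat n n" for l
    using coeff_mat_carrier[OF adj] by (simp add: B_def)
  have D: "D l \<in> carrier_mat n n" for l
    using B by (simp add: D_def)
  obtain N where N: "\<And>l. N \<le> l \<Longrightarrow> B l = 0\<^sub>m n n"
    using coeff_mat_eventually_zero[of "adj_mat (char_poly_matrix A)"] carrier_matD[OF adj]
    unfolding B_def by auto
  show ?thesis
  proof (rule eq_matI)
    fix i j
    assume "i < dim_row (0\<^sub>m n n :: 'a mat)" "j < dim_col (0\<^sub>m n n :: 'a mat)"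
    then have i: "i < n" and j: "j < n" by auto
    define T where "T l = (A ^\<^sub>m l * D l) $$ (i, j)" for l
    have telescope: "coeff (char_poly A) l * (A ^\<^sub>m l) $$ (i, j) = T l - T (Suc l)" for l
    proof -
      have Al: "A ^\<^sub>m l \<in> carrier_mat n n"
        using A by simp
      have "coeff (char_poly A) l * (A ^\<^sub>m l) $$ (i, j) = (A ^\<^sub>m l * (coeff (char_poly A) l \<cdot>\<^sub>m 1\<^sub>m n)) $$ (i, j)"
        using Al i j carrier_matD[OF Al]
        by (simp add: mult_smult_distrib[OF Al one_carrier_mat] right_mult_one_mat[OF Al])
      also have "\<dots> = (A ^\<^sub>m l * D l - A ^\<^sub>m l * (A * B l)) $$ (i, j)"
        unfolding coeff_char_poly_smult_one[OF A] B_def[symmetric] D_def[symmetric]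
          mult_minus_distrib_mat[OF Al D mult_carrier_mat[OF A B]] ..
      also have "A ^\<^sub>m l * (A * B l) = A ^\<^sub>m Suc l * D (Suc l)"
        using Al A B by (simp add: D_def assoc_mult_mat[of _ n n _ n _ n])
      finally show ?thesis
        unfolding T_def using A i j carrier_matD[OF D] by simp
    qed
    have "poly_mat (char_poly A) A $$ (i, j) = (\<Sum>l<Suc (N + n). coeff (char_poly A) l * (A ^\<^sub>m l) $$ (i, j))"
      using degree_monic_char_poly[OF A] by (intro index_poly_mat[OF A i j]) simp
    also have "\<dots> = T 0 - T (Suc (N + n))"
      unfolding telescope by (rule sum_lessThan_telescope')
    also have "\<dots> = 0"
      using A N[of "N + n"] by (simp add: T_def D_def)
    finally show "poly_mat (char_poly A) A $$ (i, j) = 0\<^sub>m n n $$ (i, j)"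
      using i j by simp
  qed (use A in simp_all)
qed

definition annihilates :: "'a::comm_ring_1 poly \<Rightarrow> 'a mat \<Rightarrow> 'a vec \<Rightarrow> bool" where
  "annihilates p A v \<longleftrightarrow> poly_mat p A *\<^sub>v v = 0\<^sub>v (dim_row A)"

context
  fixes A :: "'a::comm_ring_1 mat" and n :: nat
  assumes A: "A \<in> carrier_mat n n"
begin

lemma annihilates_mult_iff:
  assumes "v \<in> carrier_vec n"
  shows "annihilates (p * q) A v \<longleftrightarrow> annihilates p A (poly_mat q A *\<^sub>v v)"
  using A assms by (simp add: annihilates_def poly_mat_mult assoc_mult_mat_vec[of _ n n _ n])

lemma annihilates_dvd:
  assumes "v \<in> carrier_vec n" "p dvd q" "annihilates p A v"
  shows "annihilates q A v"
proof -
  obtain r where "q = r * p"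
    using assms(2) by (metis dvd_def mult.commute)
  then have "poly_mat q A *\<^sub>v v = poly_mat r A *\<^sub>v (poly_mat p A *\<^sub>v v)"
    using A assms(1) by (simp add: poly_mat_mult assoc_mult_mat_vec[of _ n n _ n])
  also have "\<dots> = 0\<^sub>v n"
    using A assms(3) by (auto simp: annihilates_def intro!: eq_vecI)
  finally show ?thesis
    using A by (simp add: annihilates_def)
qed

lemma annihilates_add_iff:
  assumes "v \<in> carrier_vec n" "annihilates p A v"
  shows "annihilates (p + q) A v \<longleftrightarrow> annihilates q A v"
  using A assms
  by (simp add: annihilates_def poly_mat_add add_mult_distrib_mat_vec[of _ n n]
      left_zero_vec[OF mult_mat_vec_carrier[OF poly_mat_carrier assms(1)]])

lemma annihilates_if_poly_mat_eq_0:
  assumes "v \<in> carrier_vec n" "poly_mat p A = 0\<^sub>m n n"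
  shows "annihilates p A v"
  using A assms by (auto simp: annihilates_def scalar_prod_def intro!: eq_vecI)

end

lemma not_unit_if_annihilates:
  fixes A :: "'a::field mat"
  assumes A: "A \<in> carrier_mat n n" and v: "v \<in> carrier_vec n" "v \<noteq> 0\<^sub>v n"
    and p: "annihilates p A v"
  shows "\<not> is_unit p"
proof
  assume "is_unit p"
  then have "annihilates 1 A v"
    using annihilates_dvd[OF A v(1) _ p] by blast
  with A v show False
    by (simp add: annihilates_def)
qed

lemma minimal_annihilator_dvd:
  fixes A :: "'a::field mat"
  assumes A: "A \<in> carrier_mat n n" and v: "v \<in> carrier_vec n"
    and m: "m \<noteq> 0" "annihilates m A v"
    and minimal: "\<And>r. r \<noteq> 0 \<Longrightarrow> annihilates r A v \<Longrightarrow> degree m \<le> degree r"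
    and h: "annihilates h A v"
  shows "m dvd h"
proof -
  have "annihilates (h div m * m + h mod m) A v \<longleftrightarrow> annihilates (h mod m) A v"
    by (rule annihilates_add_iff[OF A v annihilates_dvd[OF A v _ m(2)]]) simp
  then have ann_mod: "annihilates (h mod m) A v"
    using h by simp
  have "h mod m = 0"
  proof (rule ccontr)
    assume mod_nz: "h mod m \<noteq> 0"
    then have "degree m \<le> degree (h mod m)"
      using minimal ann_mod by blast
    with degree_mod_less'[OF m(1) mod_nz] show False
      by simp
  qed
  then show ?thesis
    by (simp add: mod_eq_0_iff_dvd)
qed

lemma irreducible_dvd_if_annihilates:
  fixes A :: "'a::field mat"
  assumes A: "A \<in> carrier_mat n n" and v: "v \<in> carrier_vec n" "v \<noteq> 0\<^sub>v n"
    and p: "irreducible p" "annihilates p A v" and h: "annihilates h A v"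
  shows "p dvd h"
proof -
  have "p \<noteq> 0"
    using p(1) by auto
  then obtain m where m_nz: "m \<noteq> 0" and m_ann: "annihilates m A v"
    and minimal: "\<And>r. r \<noteq> 0 \<Longrightarrow> annihilates r A v \<Longrightarrow> degree m \<le> degree r"
    using ex_has_least_nat[of "\<lambda>r. r \<noteq> 0 \<and> annihilates r A v" p degree] p(2) by blast
  have m_dvd: "m dvd h'" if "annihilates h' A v" for h'
    using minimal_annihilator_dvd[OF A v(1) m_nz m_ann] minimal that by blast
  obtain u where p_eq: "p = m * u"
    using m_dvd[OF p(2)] by (elim dvdE)
  have "\<not> is_unit m"
    by (rule not_unit_if_annihilates[OF A v m_ann])
  then have "is_unit u"
    using p(1) p_eq by (auto dest: irreducibleD)
  then have "p dvd m"
    using p_eq by simp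
  then show ?thesis
    using m_dvd[OF h] by (rule dvd_trans)
qed

lemma exists_irreducible_annihilator:
  fixes A :: "'a::field mat"
  assumes A: "A \<in> carrier_mat n n"
  shows "v \<in> carrier_vec n \<Longrightarrow> v \<noteq> 0\<^sub>v n \<Longrightarrow> h \<noteq> 0 \<Longrightarrow> annihilates h A v \<Longrightarrow>
    \<exists>p w. irreducible p \<and> w \<in> carrier_vec n \<and> w \<noteq> 0\<^sub>v n \<and> annihilates p A w"
proof (induction "degree h" arbitrary: h v rule: less_induct)
  case less
  show ?case
  proof (cases "irreducible h")
    case True
    with less.prems show ?thesis by blast
  next
    case False
    have "\<not> is_unit h"
      using not_unit_if_annihilates[OF A less.prems(1,2,4)] .
    with False less.prems(3) obtain a b where h: "h = a * b" and "\<not> is_unit a" "\<not> is_unit b"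
      unfolding irreducible_def by auto
    moreover have "a \<noteq> 0" "b \<noteq> 0"
      using h less.prems(3) by auto
    ultimately have deg: "degree a < degree h" "degree b < degree h"
      by (auto simp: degree_mult_eq is_unit_iff_degree)
    show ?thesis
    proof (cases "annihilates b A v")
      case True
      then show ?thesis
        using less.hyps[OF deg(2)] less.prems(1,2) \<open>b \<noteq> 0\<close> by blast
    next
      case False
      define w where "w = poly_mat b A *\<^sub>v v"
      have "w \<in> carrier_vec n"
        using mult_mat_vec_carrier[OF poly_mat_carrier[OF A] less.prems(1)] by (simp add: w_def)
      moreover have "w \<noteq> 0\<^sub>v n" "annihilates a A w"
        using A less.prems False annihilates_mult_iff[OF A less.prems(1), of a b]
        by (auto simp: w_def h annihilates_def)
      ultimately show ?thesis
        using less.hyps[OF deg(1)] \<open>a \<noteq> 0\<close> by blast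
    qed
  qed
qed

lemma polys_degree_less_linear_dependent:
  fixes r :: "nat \<Rightarrow> 'a::field poly"
  assumes deg: "\<And>j l. j \<le> d \<Longrightarrow> d \<le> l \<Longrightarrow> coeff (r j) l = 0"
  shows "\<exists>c. (\<exists>j\<le>d. c j \<noteq> 0) \<and> (\<Sum>j\<le>d. [:c j:] * r j) = 0"
proof -
  define R :: "'a mat" where
    "R = mat\<^sub>r (Suc d) (Suc d) (\<lambda>l. if l = d then 0\<^sub>v (Suc d) else vec (Suc d) (\<lambda>j. coeff (r j) l))"
  have "det R = 0"
    unfolding R_def by (rule det_row_0) auto
  then obtain c where c: "c \<in> carrier_vec (Suc d)" "c \<noteq> 0\<^sub>v (Suc d)" "R *\<^sub>v c = 0\<^sub>v (Suc d)"
    using det_0_iff_vec_prod_zero_field[of R "Suc d"] by (auto simp: R_def)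
  have comb: "(\<Sum>j\<le>d. c $ j * coeff (r j) l) = 0" for l
  proof (cases "l < d")
    case True
    have "(\<Sum>j\<le>d. c $ j * coeff (r j) l) = (R *\<^sub>v c) $ l"
      using True c(1)
      by (auto simp: R_def scalar_prod_def lessThan_Suc_atMost atLeast0LessThan mult.commute intro!: sum.cong)
    then show ?thesis
      using True c(3) by simp
  next
    case False
    then show ?thesis
      using deg by simp
  qed
  have "\<exists>j\<le>d. c $ j \<noteq> 0"
    using c(1,2) by (auto intro!: eq_vecI)
  then show ?thesis
    using comb by (intro exI[of _ "\<lambda>j. c $ j"]) (auto simp: poly_eq_iff coeff_sum)
qed

lemma pcompose_monom: "pcompose (monom c j) q = [:c:] * q ^ j"
  by (induction j) (simp_all add: monom_0 monom_Suc pcompose_pCons algebra_simps)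

text \<open>
  If deg p < deg f, the residues q^j mod p for j < deg f are linearly dependent; the resulting
  nonzero h of degree < deg f satisfies p | h \<circ> q, so h(q(A)) kills v and f | h.
\<close>

lemma irreducible_annihilator_degree_le:
  fixes A :: "'a::field mat"
  assumes A: "A \<in> carrier_mat n n" and v: "v \<in> carrier_vec n" "v \<noteq> 0\<^sub>v n"
    and p: "p \<noteq> 0" "annihilates p A v"
    and f: "irreducible f" "annihilates f (poly_mat q A) v"
  shows "degree f \<le> degree p"
proof (rule ccontr)
  assume "\<not> degree f \<le> degree p"
  then obtain d where d: "degree f = Suc d" "degree p \<le> d"
    by (cases "degree f") auto
  define r where "r j = q ^ j mod p" for j
  have r_coeff: "coeff (r j) l = 0" if "d \<le> l" for j l
  proof (cases "r j = 0")
    case False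
    then have "degree (r j) < degree p"
      unfolding r_def by (rule degree_mod_less'[OF p(1)])
    then have "degree (r j) < l"
      using d(2) that by linarith
    then show ?thesis
      by (rule coeff_eq_0)
  qed simp
  have "\<exists>c. (\<exists>j\<le>d. c j \<noteq> 0) \<and> (\<Sum>j\<le>d. [:c j:] * r j) = 0"
    by (rule polys_degree_less_linear_dependent) (rule r_coeff)
  then obtain c where c: "\<exists>j\<le>d. c j \<noteq> 0" and comb: "(\<Sum>j\<le>d. [:c j:] * r j) = 0"
    by blast
  define h where "h = (\<Sum>j\<le>d. monom (c j) j)"
  have coeff_h: "coeff h j = (if j \<le> d then c j else 0)" for j
    unfolding h_def by (simp add: coeff_sum)
  have "h \<noteq> 0"
  proof -
    obtain j where "j \<le> d" "c j \<noteq> 0"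
      using c by blast
    then show ?thesis
      using coeff_h[of j] by auto
  qed
  have "degree h \<le> d"
    by (rule degree_le) (simp add: coeff_h)
  have "pcompose h q = (\<Sum>j\<le>d. [:c j:] * q ^ j)"
    by (simp add: h_def pcompose_sum pcompose_monom)
  also have "\<dots> = (\<Sum>j\<le>d. [:c j:] * (q ^ j - r j))"
    using comb by (simp add: algebra_simps sum_subtractf)
  finally have "p dvd pcompose h q"
    by (auto intro!: dvd_sum dvd_mult simp: r_def simp del: mult_pCons_left)
  then have "annihilates (pcompose h q) A v"
    by (rule annihilates_dvd[OF A v(1) _ p(2)])
  then have "annihilates h (poly_mat q A) v"
    using A by (simp add: annihilates_def poly_mat_pcompose)
  then have "f dvd h"
    by (rule irreducible_dvd_if_annihilates[OF poly_mat_carrier[OF A] v f])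
  then have "degree f \<le> degree h"
    using \<open>h \<noteq> 0\<close> by (rule dvd_imp_degree_le)
  then show False
    using d \<open>degree h \<le> d\<close> by simp
qed

lemma irreducible_if_dvd_degree_le:
  fixes p g :: "'a::field poly"
  assumes "irreducible p" "p dvd g" "g \<noteq> 0" "degree g \<le> degree p"
  shows "irreducible g"
proof -
  obtain u where g: "g = p * u"
    using assms(2) by (elim dvdE)
  with assms(3) have "p \<noteq> 0" "u \<noteq> 0"
    by auto
  with g assms(4) have "is_unit u"
    by (simp add: degree_mult_eq is_unit_iff_degree)
  with g assms(1) show ?thesis
    by (simp add: irreducible_mult_unit_right)
qed

lemma dim_pos_if_irreducible_char_poly:
  assumes A: "A \<in> carrier_mat n n" and irr: "irreducible (char_poly A)"
  shows "0 < n"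
proof (rule ccontr)
  assume "\<not> 0 < n"
  then have "degree (char_poly A) = 0" "coeff (char_poly A) 0 = 1"
    using degree_monic_char_poly[OF A] by auto
  then have "char_poly A = 1"
    by (metis degree_eq_zeroE one_pCons pCons_0_0 coeff_pCons_0)
  with irr show False
    by simp
qed

lemma irreducible_char_poly_dvd:
  fixes A :: "'a::field mat"
  assumes A: "A \<in> carrier_mat n n" and irr: "irreducible (char_poly A)" and h: "poly_mat h A = 0\<^sub>m n n"
  shows "char_poly A dvd h"
proof -
  have e: "unit_vec n 0 \<in> carrier_vec n" "unit_vec n 0 \<noteq> (0\<^sub>v n :: 'a vec)"
    using dim_pos_if_irreducible_char_poly[OF A irr] by (auto simp: unit_vec_def vec_eq_iff)
  show ?thesis
    using e A h cayley_hamilton[OF A]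
    by (intro irreducible_dvd_if_annihilates[OF A e irr]) (auto intro: annihilates_if_poly_mat_eq_0)
qed

lemma irreducible_char_poly_if_poly_mat:
  fixes A :: "'a::field mat"
  assumes A: "A \<in> carrier_mat n n" and irr: "irreducible (char_poly (poly_mat q A))"
  shows "irreducible (char_poly A)"
proof -
  have B: "poly_mat q A \<in> carrier_mat n n"
    using A by simp
  have e: "unit_vec n 0 \<in> carrier_vec n" "unit_vec n 0 \<noteq> (0\<^sub>v n :: 'a vec)"
    using dim_pos_if_irreducible_char_poly[OF B irr] by (auto simp: unit_vec_def vec_eq_iff)
  have ann: "annihilates (char_poly X) X w" if "X \<in> carrier_mat n n" "w \<in> carrier_vec n" for X w
    using that cayley_hamilton[OF that(1)] by (intro annihilates_if_poly_mat_eq_0)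
  have "char_poly A \<noteq> 0"
    using degree_monic_char_poly[OF A] by auto
  then obtain p w where p: "irreducible p" "annihilates p A w" and w: "w \<in> carrier_vec n" "w \<noteq> 0\<^sub>v n"
    using exists_irreducible_annihilator[OF A e \<open>char_poly A \<noteq> 0\<close> ann[OF A e(1)]] by blast
  have dvd: "p dvd char_poly A"
    by (rule irreducible_dvd_if_annihilates[OF A w p ann[OF A w(1)]])
  have deg: "degree (char_poly A) \<le> degree p"
    using irreducible_annihilator_degree_le[OF A w _ p(2) irr ann[OF B w(1)]] p(1)
      degree_monic_char_poly[OF A] degree_monic_char_poly[OF B] by auto
  show ?thesis
    by (rule irreducible_if_dvd_degree_le[OF p(1) dvd \<open>char_poly A \<noteq> 0\<close> deg])
qed

lemma poly_mat_reflect_poly: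
  assumes A: "A \<in> carrier_mat n n" and B: "B \<in> carrier_mat n n" and AB: "A * B = 1\<^sub>m n"
  shows "poly_mat (reflect_poly p) A = A ^\<^sub>m degree p * poly_mat p B"
proof (induction p)
  case (pCons a p)
  show ?case
  proof (cases "p = 0")
    case True
    then show ?thesis
      using A B by simp
  next
    case False
    let ?Ad = "A ^\<^sub>m degree p"
    have Ad: "?Ad \<in> carrier_mat n n"
      using A by simp
    have P: "poly_mat p B \<in> carrier_mat n n"
      using B by simp
    have "?Ad * A * (B * poly_mat p B) = ?Ad * ((A * B) * poly_mat p B)"
      by (simp add: assoc_mult_mat[OF Ad A mult_carrier_mat[OF B P]] assoc_mult_mat[OF A B P])
    also have "\<dots> = ?Ad * poly_mat p B"
      using AB P by simp
    finally have "?Ad * A * (B * poly_mat p B) = ?Ad * poly_mat p B" .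
    moreover have AdA: "?Ad * A \<in> carrier_mat n n"
      using Ad A by (rule mult_carrier_mat)
    ultimately have "A ^\<^sub>m degree (pCons a p) * poly_mat (pCons a p) B =
      a \<cdot>\<^sub>m (?Ad * A) + ?Ad * poly_mat p B"
      using False B P
      by (simp add: poly_mat_pCons mult_add_distrib_mat[OF AdA smult_carrier_mat[OF one_carrier_mat] mult_carrier_mat[OF B P]]
          mult_smult_distrib[OF AdA one_carrier_mat] right_mult_one_mat[OF AdA])
    also have "\<dots> = poly_mat (reflect_poly (pCons a p)) A"
      using False pCons A
      by (simp add: reflect_poly_pCons' poly_mat_add poly_mat_monom)
        (rule comm_add_mat[OF smult_carrier_mat[OF AdA] mult_carrier_mat[OF Ad P]])
    finally show ?thesis ..
  qed
qed (use A B in simp)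

text \<open>J^-1 A^T J is an inverse of A and is similar to A^T.\<close>

lemma poly_mat_reflect_char_poly:
  fixes A J :: "'a::field mat"
  assumes J: "J \<in> carrier_mat n n" "det J \<noteq> 0"
    and A: "A \<in> carrier_mat n n" and form: "transpose_mat A * J * A = J"
  shows "poly_mat (reflect_poly (char_poly A)) A = 0\<^sub>m n n"
proof -
  obtain Ji where Ji: "Ji \<in> carrier_mat n n" "Ji * J = 1\<^sub>m n" "J * Ji = 1\<^sub>m n"
    using det_non_zero_imp_unit[OF J, of "()"] unfolding Units_def by (auto simp: ring_mat_simps)
  define B where "B = Ji * transpose_mat A * J"
  have B: "B \<in> carrier_mat n n"
    using A J Ji by (simp add: B_def)
  have "B * A = Ji * (transpose_mat A * J * A)"
    using A J Ji by (simp add: B_def assoc_mult_mat[of _ n n _ n _ n])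
  then have AB: "A * B = 1\<^sub>m n"
    using mat_mult_left_right_inverse[OF B A] form Ji by simp
  have "similar_mat B (transpose_mat A)"
    using A J Ji B unfolding similar_mat_def similar_mat_wit_def B_def by (intro exI[of _ Ji] exI[of _ J]) auto
  then have "char_poly B = char_poly A"
    using A by (simp add: char_poly_similar)
  then show ?thesis
    using poly_mat_reflect_poly[OF A B AB] cayley_hamilton[OF B] A by simp
qed

lemma self_reciprocal_if_dvd_reflect_poly:
  fixes g :: "'a::field poly"
  assumes monic: "monic g" and coeff_0: "coeff g 0 \<noteq> 0" and dvd: "g dvd reflect_poly g"
  shows "self_reciprocal g"
proof -
  obtain u where u: "reflect_poly g = g * u"
    using dvd by (elim dvdE)
  have "g \<noteq> 0" "u \<noteq> 0"
    using monic coeff_0 u by auto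
  moreover have "degree (reflect_poly g) = degree g"
    using coeff_0 by simp
  ultimately have "degree u = 0"
    using u by (simp add: degree_mult_eq)
  then obtain a where a: "u = [:a:]"
    by (elim degree_eq_zeroE)
  have "a = coeff g 0"
    using arg_cong[OF u, of lead_coeff] monic coeff_0 a by (simp add: lead_coeff_mult coeff_reflect_poly)
  then show ?thesis
    using u a coeff_0 by (simp add: self_reciprocal_def reciprocal_poly_def)
qed

theorem lemma5p1:
  fixes f :: "'a::{finite,field} poly"
    and J C_f \<alpha> :: "'a mat"
    and M k :: nat
  assumes "M \<ge> 2" and "k \<ge> 1"
    and "SRIM f" and "degree f = 2 * k"
    and "nondeg_alternating (2 * k) J"
    and "C_f \<in> symplectic_group (2 * k) J" and "char_poly C_f = f"
    and "\<alpha> \<in> symplectic_group (2 * k) J" and "\<alpha> ^\<^sub>m M = C_f"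
  shows "\<exists>g. g dvd pcompose f (monom 1 M) \<and> SRIM g \<and> degree g = 2 * k"
proof -
  define g where "g = char_poly \<alpha>"
  have J: "J \<in> carrier_mat (2 * k) (2 * k)" "det J \<noteq> 0"
    using assms(5) by (auto simp: nondeg_alternating_def)
  have \<alpha>: "\<alpha> \<in> carrier_mat (2 * k) (2 * k)" "transpose_mat \<alpha> * J * \<alpha> = J"
    using assms(8) by (auto simp: symplectic_group_def)
  have C_f: "C_f = poly_mat (monom 1 M) \<alpha>"
    using \<alpha>(1) assms(9) by (simp add: poly_mat_monom)
  have irr: "irreducible g"
    using irreducible_char_poly_if_poly_mat[OF \<alpha>(1), of "monom 1 M"] assms(3,7) C_f by (simp add: g_def SRIM_def)
  have g_dvd: "g dvd h" if "poly_mat h \<alpha> = 0\<^sub>m (2 * k) (2 * k)" for h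
    using irreducible_char_poly_dvd[OF \<alpha>(1) _ that] irr by (simp add: g_def)
  have "g dvd pcompose f (monom 1 M)"
    using cayley_hamilton[of C_f] \<alpha>(1) assms(7) C_f by (intro g_dvd) (simp add: poly_mat_pcompose)
  moreover have "degree g = 2 * k" "monic g"
    using degree_monic_char_poly[OF \<alpha>(1)] by (auto simp: g_def)
  moreover have "self_reciprocal g"
  proof (rule self_reciprocal_if_dvd_reflect_poly)
    show "coeff g 0 \<noteq> 0"
      using root_imp_reducible_poly[of g 0] irr assms(2) \<open>degree g = 2 * k\<close> by (auto simp: poly_0_coeff_0)
    show "g dvd reflect_poly g"
      using poly_mat_reflect_char_poly[OF J \<alpha>] by (intro g_dvd) (simp add: g_def)
  qed fact
  ultimately show ?thesis
    using irr by (auto simp: SRIM_def)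
qed

end
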